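(* Suppose every request of the input $\sigma$ is a triggering request with respect to ALG run on $\sigma$. For each $k\in[m]$ let $x_k$ be the position of $e_k$ in ALG's list at time $q_k$ just before ALG acts at that time. Then $$ALG(\sigma)\le 3\sum_{k=1}^m x_k.$$
   Context: List Update with Time Windows. A set $\mathbb{E}$ of $n$ elements is kept in an ordered list (position $1$ is the head). An input $\sigma$ is a sequence of requests $r_1,\dots,r_m$; request $r_k$ specifies an element $e_k\in\mathbb{E}$, an arrival time $a_k$ and a deadline $q_k\ge a_k$. An algorithm may perform an access up to position $i$ at cost $i$, serving every pending request whose element currently lies in positions $1,\dots,i$, and may swap adjacent elements at cost $1$; actions are instantaneous; every request must be served within $[a_k,q_k]$. Cost = total access cost + number of swaps. Algorithm ALG: whenever the current time equals the deadline of at least one pending request, let the triggering element be the element at the largest current position among those elements having a pending request whose deadline is the current time, and let $i$ be its position. ALG accesses the first $\min(2i-1,n)$ positions and then moves the triggering element to the front by $i-1$ adjacent swaps. At each such event the triggering request is one (arbitrarily fixed) pending request for the triggering element whose deadline is the current time. A request of $\sigma$ is a triggering request if it is the triggering request of some event of ALG on $\sigma$. *)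

theory Defs
  imports Complex_Main
begin

text \<open>
  The input sigma is a list of requests; request k (0-based index k < length sigma)
  is the paper's request r_(k+1).  The initial list of ALG is a distinct list
  containing the n elements of E (head first).
\<close>

type_synonym 'a request = "'a \<times> real \<times> real"

definition elem :: "'a request \<Rightarrow> 'a" where "elem r = fst r"
definition arr :: "'a request \<Rightarrow> real" where "arr r = fst (snd r)"
definition dl :: "'a request \<Rightarrow> real" where "dl r = snd (snd r)"

definition pos :: "'a list \<Rightarrow> 'a \<Rightarrow> nat" where
  "pos L e = length (takeWhile (\<lambda>x. x \<noteq> e) L) + 1"

text \<open>State of ALG: current list, set of served request indices, accumulated cost.\<close>
type_synonym 'a state = "'a list \<times> nat set \<times> nat"

definition pending :: "'a request list \<Rightarrow> nat set \<Rightarrow> real \<Rightarrow> nat \<Rightarrow> bool" where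
  "pending \<sigma> S t k \<longleftrightarrow> k < length \<sigma> \<and> k \<notin> S \<and> arr (\<sigma>!k) \<le> t"

definition due :: "'a request list \<Rightarrow> nat set \<Rightarrow> real \<Rightarrow> nat set" where
  "due \<sigma> S t = {k. pending \<sigma> S t k \<and> dl (\<sigma>!k) = t}"

definition trig_pos :: "'a request list \<Rightarrow> 'a state \<Rightarrow> real \<Rightarrow> nat" where
  "trig_pos \<sigma> st t = Max ((\<lambda>k. pos (fst st) (elem (\<sigma>!k))) ` due \<sigma> (fst (snd st)) t)"

definition trig_elem :: "'a request list \<Rightarrow> 'a state \<Rightarrow> real \<Rightarrow> 'a" where
  "trig_elem \<sigma> st t = fst st ! (trig_pos \<sigma> st t - 1)"

text \<open>One event of ALG at time t: access the first min(2i-1,n) positions (serving every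
  pending request whose element lies there), then move the triggering element to the
  front using i-1 adjacent swaps.\<close>
definition alg_step :: "'a request list \<Rightarrow> real \<Rightarrow> 'a state \<Rightarrow> 'a state" where
  "alg_step \<sigma> t st =
     (let (L, S, c) = st in
      if due \<sigma> S t = {} then st
      else let i = trig_pos \<sigma> st t;
               m = min (2 * i - 1) (length L);
               e = trig_elem \<sigma> st t;
               S' = S \<union> {k. pending \<sigma> S t k \<and> pos L (elem (\<sigma>!k)) \<le> m}
           in (e # remove1 e L, S', c + m + (i - 1)))"

definition deadlines :: "'a request list \<Rightarrow> real set" where
  "deadlines \<sigma> = dl ` set \<sigma>"

definition state_before :: "'a list \<Rightarrow> 'a request list \<Rightarrow> real \<Rightarrow> 'a state" where
  "state_before L0 \<sigma> t =
     fold (alg_step \<sigma>) (sorted_list_of_set {d \<in> deadlines \<sigma>. d < t}) (L0, {}, 0)"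

definition alg_final :: "'a list \<Rightarrow> 'a request list \<Rightarrow> 'a state" where
  "alg_final L0 \<sigma> = fold (alg_step \<sigma>) (sorted_list_of_set (deadlines \<sigma>)) (L0, {}, 0)"

definition alg_cost :: "'a list \<Rightarrow> 'a request list \<Rightarrow> nat" where
  "alg_cost L0 \<sigma> = snd (snd (alg_final L0 \<sigma>))"

definition is_event :: "'a list \<Rightarrow> 'a request list \<Rightarrow> real \<Rightarrow> bool" where
  "is_event L0 \<sigma> t \<longleftrightarrow> t \<in> deadlines \<sigma> \<and> due \<sigma> (fst (snd (state_before L0 \<sigma> t))) t \<noteq> {}"

definition trig_candidates :: "'a list \<Rightarrow> 'a request list \<Rightarrow> real \<Rightarrow> nat set" where
  "trig_candidates L0 \<sigma> t =
     (let st = state_before L0 \<sigma> t in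
      {k \<in> due \<sigma> (fst (snd st)) t. elem (\<sigma>!k) = trig_elem \<sigma> st t})"

text \<open>A choice of triggering request (arbitrary, but fixed) for every event.\<close>
definition valid_choice :: "'a list \<Rightarrow> 'a request list \<Rightarrow> (real \<Rightarrow> nat) \<Rightarrow> bool" where
  "valid_choice L0 \<sigma> ch \<longleftrightarrow> (\<forall>t. is_event L0 \<sigma> t \<longrightarrow> ch t \<in> trig_candidates L0 \<sigma> t)"

definition triggering_request :: "'a list \<Rightarrow> 'a request list \<Rightarrow> (real \<Rightarrow> nat) \<Rightarrow> nat \<Rightarrow> bool" where
  "triggering_request L0 \<sigma> ch k \<longleftrightarrow> (\<exists>t. is_event L0 \<sigma> t \<and> ch t = k)"

end

theory Submission imports Defs begin

text \<open>ALG pays only at events; at an event whose triggering element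
  sits at position i it pays min(2i-1,n) for the access and i-1 for the swaps, at most 3i.
  The triggering request k of that event has deadline equal to the event time, so i = x_k,
  and distinct events have distinct triggering requests.\<close>

lemma length_takeWhile_neq_less:
  "x \<in> set L \<Longrightarrow> length (takeWhile (\<lambda>y. y \<noteq> x) L) < length L"
  by (induction L) auto

lemma nth_pos: "x \<in> set L \<Longrightarrow> L ! (pos L x - 1) = x"
  using nth_length_takeWhile[OF length_takeWhile_neq_less] by (fastforce simp: pos_def)

lemma insert_set_remove1: "x \<in> set xs \<Longrightarrow> insert x (set (remove1 x xs)) = set xs"
  by (induction xs) auto

lemma sorted_list_of_set_less_nth:
  fixes D :: "'b::linorder set"
  assumes "finite D" and "j < card D"
  shows "sorted_list_of_set {d \<in> D. d < sorted_list_of_set D ! j} = take j (sorted_list_of_set D)"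
proof -
  let ?xs = "sorted_list_of_set D"
  have sorted: "sorted_wrt (<) ?xs" and set_xs: "set ?xs = D" and j: "j < length ?xs"
    using assms by auto
  have less_iff: "?xs ! i < ?xs ! j \<longleftrightarrow> i < j" if "i < length ?xs" for i
    by (metis j not_less_iff_gr_or_eq sorted sorted_wrt_nth_less that)
  have "set (take j ?xs) = {d \<in> D. d < ?xs ! j}"
  proof (intro set_eqI iffI)
    fix d assume "d \<in> set (take j ?xs)"
    then obtain i where "i < j" "d = ?xs ! i"
      using j by (auto simp: in_set_conv_nth)
    then show "d \<in> {d \<in> D. d < ?xs ! j}"
      using j less_iff set_xs by auto
  next
    fix d assume "d \<in> {d \<in> D. d < ?xs ! j}"
    then have "d \<in> set ?xs" "d < ?xs ! j"
      using set_xs by auto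
    then obtain i where "i < length ?xs" "d = ?xs ! i" "?xs ! i < ?xs ! j"
      by (auto simp: in_set_conv_nth)
    then have "i < j"
      using less_iff by blast
    then show "d \<in> set (take j ?xs)"
      using \<open>d = ?xs ! i\<close> j by (simp add: in_set_conv_nth) (metis length_take min.absorb4 nth_take)
  qed
  moreover have "sorted_wrt (<) (take j ?xs)"
    using sorted by (rule sorted_wrt_take)
  ultimately show ?thesis
    by (metis strict_sorted_equal strict_sorted_list_of_set set_sorted_list_of_set List.finite_set)
qed

lemma finite_due: "finite (due \<sigma> S t)"
  by (rule finite_subset[of _ "{..<length \<sigma>}"]) (auto simp: due_def pending_def)

lemma alg_step_no_due: "due \<sigma> (fst (snd st)) t = {} \<Longrightarrow> alg_step \<sigma> t st = st"
  by (cases st) (simp add: alg_step_def)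

lemma alg_step_cost_le:
  "snd (snd (alg_step \<sigma> t st)) \<le> snd (snd st) + 3 * trig_pos \<sigma> st t"
  by (cases st) (auto simp: alg_step_def Let_def)

lemma trig_pos_attained:
  assumes "due \<sigma> (fst (snd st)) t \<noteq> {}"
  obtains k where "k \<in> due \<sigma> (fst (snd st)) t" "trig_pos \<sigma> st t = pos (fst st) (elem (\<sigma>!k))"
proof -
  have "trig_pos \<sigma> st t \<in> (\<lambda>k. pos (fst st) (elem (\<sigma>!k))) ` due \<sigma> (fst (snd st)) t"
    unfolding trig_pos_def using assms finite_due by (intro Max_in) auto
  then show ?thesis
    using that by blast
qed

context
  fixes \<sigma> :: "'a request list" and st :: "'a state" and t :: real
  assumes requests_in_list: "\<forall>r \<in> set \<sigma>. elem r \<in> set (fst st)"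
begin

lemma trig_elem_pos:
  assumes "due \<sigma> (fst (snd st)) t \<noteq> {}"
  shows "trig_elem \<sigma> st t \<in> set (fst st) \<and> pos (fst st) (trig_elem \<sigma> st t) = trig_pos \<sigma> st t"
proof -
  obtain k where k: "k \<in> due \<sigma> (fst (snd st)) t" "trig_pos \<sigma> st t = pos (fst st) (elem (\<sigma>!k))"
    using trig_pos_attained[OF assms] .
  have "elem (\<sigma>!k) \<in> set (fst st)"
    using k(1) requests_in_list by (auto simp: due_def pending_def)
  then show ?thesis
    using k(2) nth_pos by (fastforce simp: trig_elem_def)
qed

lemma set_alg_step: "set (fst (alg_step \<sigma> t st)) = set (fst st)"
proof (cases "due \<sigma> (fst (snd st)) t = {}")
  case True
  then show ?thesis by (simp add: alg_step_no_due)
next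
  case False
  then have "trig_elem \<sigma> st t \<in> set (fst st)"
    using trig_elem_pos by blast
  with False show ?thesis
    by (cases st) (simp add: alg_step_def Let_def insert_set_remove1)
qed

end

lemma set_fold_alg_step:
  "\<forall>r \<in> set \<sigma>. elem r \<in> set (fst st) \<Longrightarrow> set (fst (fold (alg_step \<sigma>) ts st)) = set (fst st)"
  by (induction ts arbitrary: st) (simp_all add: set_alg_step)

lemma set_state_before:
  "\<forall>r \<in> set \<sigma>. elem r \<in> set L0 \<Longrightarrow> set (fst (state_before L0 \<sigma> t)) = set L0"
  unfolding state_before_def using set_fold_alg_step[of \<sigma> "(L0, {}, 0)"] by simp

lemma state_before_nth_deadline:
  assumes "j < card (deadlines \<sigma>)"
  shows "state_before L0 \<sigma> (sorted_list_of_set (deadlines \<sigma>) ! j)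
           = fold (alg_step \<sigma>) (take j (sorted_list_of_set (deadlines \<sigma>))) (L0, {}, 0)"
  unfolding state_before_def
  using sorted_list_of_set_less_nth[OF _ assms] by (simp add: deadlines_def)

lemma alg_cost_le_sum_trig_pos:
  "alg_cost L0 \<sigma> \<le> (\<Sum>t \<in> {t \<in> deadlines \<sigma>. is_event L0 \<sigma> t}. 3 * trig_pos \<sigma> (state_before L0 \<sigma> t) t)"
proof -
  define xs where "xs = sorted_list_of_set (deadlines \<sigma>)"
  define f where "f t = (if is_event L0 \<sigma> t then 3 * trig_pos \<sigma> (state_before L0 \<sigma> t) t else 0)" for t
  have fin: "finite (deadlines \<sigma>)"
    by (simp add: deadlines_def)
  have "snd (snd (fold (alg_step \<sigma>) (take j xs) (L0, {}, 0))) \<le> sum_list (map f (take j xs))"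
    if "j \<le> length xs" for j
    using that
  proof (induction j)
    case 0
    then show ?case by simp
  next
    case (Suc j)
    let ?t = "xs ! j"
    have j: "j < length xs"
      using Suc.prems by simp
    then have before: "state_before L0 \<sigma> ?t = fold (alg_step \<sigma>) (take j xs) (L0, {}, 0)"
      using state_before_nth_deadline by (simp add: xs_def)
    have "?t \<in> deadlines \<sigma>"
      using nth_mem[OF j] fin by (simp add: xs_def)
    then have "snd (snd (alg_step \<sigma> ?t (state_before L0 \<sigma> ?t))) \<le> snd (snd (state_before L0 \<sigma> ?t)) + f ?t"
      using alg_step_cost_le[of \<sigma> ?t] alg_step_no_due[of \<sigma> _ ?t]
      by (cases "is_event L0 \<sigma> ?t") (simp_all add: f_def is_event_def)
    then show ?case
      using Suc j before by (simp add: take_Suc_conv_app_nth)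
  qed
  from this[of "length xs"] have "alg_cost L0 \<sigma> \<le> sum_list (map f xs)"
    by (simp add: alg_cost_def alg_final_def xs_def)
  also have "\<dots> = sum f (deadlines \<sigma>)"
    using fin by (simp add: xs_def sum_list_distinct_conv_sum_set)
  also have "\<dots> = (\<Sum>t \<in> {t \<in> deadlines \<sigma>. is_event L0 \<sigma> t}. 3 * trig_pos \<sigma> (state_before L0 \<sigma> t) t)"
    using fin by (simp add: f_def sum.inter_filter)
  finally show ?thesis .
qed

theorem mainTheorem5:
  fixes L0 :: "'a list" and \<sigma> :: "'a request list" and ch :: "real \<Rightarrow> nat"
  assumes "distinct L0"
    and "\<forall>r \<in> set \<sigma>. elem r \<in> set L0 \<and> arr r \<le> dl r"
    and "valid_choice L0 \<sigma> ch"
    and "\<forall>k < length \<sigma>. triggering_request L0 \<sigma> ch k"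
  shows "alg_cost L0 \<sigma> \<le>
           3 * (\<Sum>k < length \<sigma>. pos (fst (state_before L0 \<sigma> (dl (\<sigma>!k)))) (elem (\<sigma>!k)))"
proof -
  define x where "x k = pos (fst (state_before L0 \<sigma> (dl (\<sigma>!k)))) (elem (\<sigma>!k))" for k
  define E where "E = {t \<in> deadlines \<sigma>. is_event L0 \<sigma> t}"
  have in_list: "\<forall>r \<in> set \<sigma>. elem r \<in> set L0"
    using assms(2) by blast
  have trigger: "ch t < length \<sigma> \<and> dl (\<sigma>!ch t) = t \<and> trig_pos \<sigma> (state_before L0 \<sigma> t) t = x (ch t)"
    if "t \<in> E" for t
  proof -
    let ?st = "state_before L0 \<sigma> t"
    have due: "ch t \<in> due \<sigma> (fst (snd ?st)) t" and elem: "elem (\<sigma>!ch t) = trig_elem \<sigma> ?st t"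
      using assms(3) that by (auto simp: E_def valid_choice_def trig_candidates_def Let_def)
    have "pos (fst ?st) (trig_elem \<sigma> ?st t) = trig_pos \<sigma> ?st t"
      using trig_elem_pos[of \<sigma> ?st t] set_state_before[OF in_list] due in_list by auto
    with due elem show ?thesis
      by (auto simp: due_def pending_def x_def)
  qed
  have "alg_cost L0 \<sigma> \<le> (\<Sum>t \<in> E. 3 * x (ch t))"
    using alg_cost_le_sum_trig_pos[of L0 \<sigma>] trigger by (simp add: E_def)
  also have "\<dots> = 3 * (\<Sum>k \<in> ch ` E. x k)"
  proof -
    have "inj_on ch E"
      by (metis inj_onI trigger)
    then show ?thesis
      by (simp add: sum.reindex sum_distrib_left)
  qed
  also have "\<dots> \<le> 3 * (\<Sum>k < length \<sigma>. x k)"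
    using trigger by (intro mult_left_mono sum_mono2) auto
  finally show ?thesis
    by (simp add: x_def)
qed

end
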